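(* For integers $n,k$ with $n\geq k+1\geq 2$, the average $k$-alternating length of permutations in $\mathfrak{S}_n$ is $$E_n(as_k)=\frac{1}{n!}\sum_{w\in\mathfrak{S}_n} as_k(w)=\frac{4(n-k)+5}{6}.$$
   Context: $\mathfrak{S}_n$ is the set of permutations $w=w_1w_2\cdots w_n$ of $\{1,\dots,n\}$ (in one-line notation). A subsequence $w_{i_1}w_{i_2}\cdots w_{i_s}$ ($i_1<\dots<i_s$) of $w$ is alternating if $w_{i_1}>w_{i_2}<w_{i_3}>\cdots$ (inequalities alternate, starting with $>$). It is $k$-alternating if moreover $|w_{i_j}-w_{i_{j+1}}|\geq k$ for every $j$. The $k$-alternating length $as_k(w)$ is the maximal length (number of elements) of a $k$-alternating subsequence of $w$. *)

theory Defs
  imports Main "HOL-Combinatorics.Multiset_Permutations" "HOL-Library.Sublist"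
begin

text \<open>Indices here are 0-based, so position j even corresponds to a ">" step.\<close>
definition k_alternating :: "nat \<Rightarrow> nat list \<Rightarrow> bool" where
  "k_alternating k xs \<longleftrightarrow>
     (\<forall>j. Suc j < length xs \<longrightarrow>
        (if even j then xs ! j > xs ! Suc j else xs ! j < xs ! Suc j) \<and>
        int k \<le> \<bar>int (xs ! j) - int (xs ! Suc j)\<bar>)"

definition as_k :: "nat \<Rightarrow> nat list \<Rightarrow> nat" where
  "as_k k w = Max {length xs | xs. subseq xs w \<and> k_alternating k xs}"

end

theory Submission
  imports Defs
begin

text \<open>
  Call position \<open>i\<close> of \<open>w\<close> a k-peak if every larger entry is separated from it by an entry
  at most \<open>w\<^sub>i - k\<close>, and a k-valley if some entry at least \<open>w\<^sub>i + k\<close> lies to its left with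
  no smaller entry in between and every smaller entry to its right is separated from it by an
  entry at least \<open>w\<^sub>i + k\<close>. In a permutation the k-peaks and k-valleys alternate, starting
  with a k-peak, and consecutive ones differ by at least \<open>k\<close>; conversely, between the
  neighbours of the \<open>t\<close>-th entry of a k-alternating subsequence there is a k-peak (\<open>t\<close> even)
  or a k-valley (\<open>t\<close> odd). Hence \<open>as\<^sub>k(w)\<close> is the number of k-peaks plus k-valleys.

  Whether the value \<open>v\<close> is a k-peak depends only on the relative order of \<open>v\<close> and the values
  outside \<open>(v - k, v)\<close>, and there only on the two neighbours of \<open>v\<close>: neither may exceed \<open>v\<close>.
  A uniformly random permutation induces a uniformly random order on these values, so \<open>v\<close> is
  a k-peak with probability \<open>(v - k)(v - k + 1) / ((n - k)(n - k + 1))\<close>; likewise \<open>v\<close> is a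
  k-valley with probability \<open>(n + 1 - v - k)\<^sup>2 / ((n - k)(n - k + 1))\<close>. Summing over \<open>v\<close>, a
  permutation has on average \<open>(n - k + 2)/3\<close> k-peaks and \<open>(2(n - k) + 1)/6\<close> k-valleys.
\<close>

section \<open>Counting permutations by first entry and by pattern\<close>

lemma card_permutations_of_set_split_hd:
  assumes "finite A" "A \<noteq> {}"
  shows "card {w\<in>permutations_of_set A. P w}
       = (\<Sum>x\<in>A. card {w\<in>permutations_of_set (A - {x}). P (x # w)})"
proof -
  have "{w\<in>permutations_of_set A. P w}
      = (\<Union>x\<in>A. (\<lambda>w. x # w) ` {w\<in>permutations_of_set (A - {x}). P (x # w)})"
    using permutations_of_set_nonempty[OF assms(2)] by auto
  also have "card \<dots> = (\<Sum>x\<in>A. card ((\<lambda>w. x # w) ` {w\<in>permutations_of_set (A - {x}). P (x # w)}))"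
    by (rule card_UN_disjoint) (use assms in auto)
  also have "\<dots> = (\<Sum>x\<in>A. card {w\<in>permutations_of_set (A - {x}). P (x # w)})"
    by (intro sum.cong refl card_image) (auto simp: inj_on_def)
  finally show ?thesis .
qed

lemma card_permutations_of_set_filter:
  assumes "finite A" "C \<subseteq> A"
  shows "card {w\<in>permutations_of_set A. Q (filter (\<lambda>x. x \<in> C) w)} * fact (card C)
         = fact (card A) * card {u\<in>permutations_of_set C. Q u}"
  using assms
proof (induction "card A" arbitrary: A C Q)
  case 0
  then have "A = {}" "C = {}" by auto
  then have "{w\<in>permutations_of_set A. Q (filter (\<lambda>x. x \<in> C) w)} = {u\<in>permutations_of_set C. Q u}"
    by auto
  with \<open>A = {}\<close> \<open>C = {}\<close> show ?case by (simp only: card.empty fact_0 mult_1 mult_1_right)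
next
  case (Suc n)
  have fA: "finite A" and ne: "A \<noteq> {}" and fC: "finite C"
    using Suc by (auto intro: finite_subset)
  have IH: "card {w\<in>permutations_of_set (A - {x}). Q' (filter (\<lambda>y. y \<in> C') w)} * fact (card C')
      = fact n * card {u\<in>permutations_of_set C'. Q' u}" if "x \<in> A" "C' \<subseteq> A - {x}" for x C' Q'
  proof -
    have "card (A - {x}) = n" using Suc.hyps(2) that fA by simp
    then show ?thesis using Suc.hyps(1)[of "A - {x}" C' Q'] that fA by simp
  qed
  define c where "c = card {u\<in>permutations_of_set C. Q u}"
  define N where "N x = card {w\<in>permutations_of_set (A - {x}). Q (filter (\<lambda>y. y \<in> C) (x # w))}" for x
  define T where "T x = card {u\<in>permutations_of_set (C - {x}). Q (x # u)}" for x
  have outside: "N x * fact (card C) = fact n * c" if "x \<in> A - C" for x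
    using IH[of x C Q] that Suc.prems unfolding N_def c_def by auto
  have inside: "N x * fact (card C) = card C * (fact n * T x)" if "x \<in> C" for x
  proof -
    have "filter (\<lambda>y. y \<in> C) (x # w) = x # filter (\<lambda>y. y \<in> C - {x}) w"
      if "w \<in> permutations_of_set (A - {x})" for w
      using that \<open>x \<in> C\<close> by (auto dest: permutations_of_setD intro: filter_cong)
    then have "N x = card {w\<in>permutations_of_set (A - {x}). Q (x # filter (\<lambda>y. y \<in> C - {x}) w)}"
      unfolding N_def by (intro arg_cong[where f = card] Collect_cong) auto
    then have "N x * fact (card (C - {x})) = fact n * T x"
      using IH[of x "C - {x}" "\<lambda>u. Q (x # u)"] that Suc.prems unfolding T_def by auto
    moreover have "fact (card C) = card C * fact (card (C - {x}))"
      using that fC fact_reduce[of "card C", where 'a = nat] by (auto simp: card_gt_0_iff)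
    ultimately show ?thesis by (simp add: algebra_simps)
  qed
  have sum_T: "card C * (\<Sum>x\<in>C. T x) = card C * c"
    using card_permutations_of_set_split_hd[OF fC, of Q] unfolding T_def c_def
    by (cases "C = {}") simp_all
  have "card {w\<in>permutations_of_set A. Q (filter (\<lambda>x. x \<in> C) w)} * fact (card C)
      = (\<Sum>x\<in>A - C. N x * fact (card C)) + (\<Sum>x\<in>C. N x * fact (card C))"
    unfolding card_permutations_of_set_split_hd[OF fA ne] N_def sum_distrib_right
    by (rule sum.subset_diff[OF Suc.prems(2) fA])
  also have "\<dots> = card (A - C) * fact n * c + fact n * (card C * (\<Sum>x\<in>C. T x))"
    by (simp add: outside inside sum_distrib_left mult.left_commute)
  also have "\<dots> = (card (A - C) + card C) * fact n * c"
    unfolding sum_T by (simp add: algebra_simps)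
  also have "card (A - C) + card C = card A"
    using Suc.prems(2) fA fC by (simp add: card_Diff_subset card_mono)
  finally show ?case using Suc.hyps(2)[symmetric] by (simp add: c_def)
qed

section \<open>Permutations in which the neighbours of a value avoid a predicate\<close>

fun neighbours_avoid :: "bool \<Rightarrow> ('a \<Rightarrow> bool) \<Rightarrow> 'a \<Rightarrow> 'a option \<Rightarrow> 'a list \<Rightarrow> bool" where
  "neighbours_avoid e P v p [] = True"
| "neighbours_avoid e P v p (x # xs) =
     (if x = v then (case p of None \<Rightarrow> e | Some q \<Rightarrow> \<not> P q) \<and> (xs = [] \<or> \<not> P (hd xs))
      else neighbours_avoid e P v (Some x) xs)"

lemma neighbours_avoid_append:
  "v \<notin> set xs \<Longrightarrow> neighbours_avoid e P v p (xs @ v # ys) \<longleftrightarrow>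
    (case if xs = [] then p else Some (last xs) of None \<Rightarrow> e | Some q \<Rightarrow> \<not> P q) \<and>
    (ys = [] \<or> \<not> P (hd ys))"
  by (induction xs arbitrary: p) auto

lemma card_permutations_of_set_hd_not:
  assumes "finite D" "D \<noteq> {}"
  shows "card {u\<in>permutations_of_set D. u = [] \<or> \<not> P (hd u)} = card {x\<in>D. \<not> P x} * fact (card D - 1)"
proof -
  have "card {u\<in>permutations_of_set D. u = [] \<or> \<not> P (hd u)}
      = (\<Sum>x\<in>D. if \<not> P x then fact (card D - 1) else 0)"
    unfolding card_permutations_of_set_split_hd[OF assms]
    by (intro sum.cong refl) (use assms in auto)
  also have "\<dots> = card {x\<in>D. \<not> P x} * fact (card D - 1)"
    using assms by (simp add: sum.If_cases Int_def)
  finally show ?thesis .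
qed

lemma card_permutations_of_set_insert_split_hd:
  assumes "finite D" "v \<notin> D"
  shows "card {u\<in>permutations_of_set (insert v D). Q u}
     = card {u\<in>permutations_of_set (insert v D). hd u \<noteq> v \<and> Q u} + card {u\<in>permutations_of_set D. Q (v # u)}"
proof -
  have fin: "finite (insert v D)" using assms by simp
  have "(\<Sum>y\<in>D. card {w\<in>permutations_of_set (insert v D - {y}). Q (y # w)})
      = (\<Sum>y\<in>D. card {w\<in>permutations_of_set (insert v D - {y}). hd (y # w) \<noteq> v \<and> Q (y # w)})"
    by (intro sum.cong refl arg_cong[where f = card] Collect_cong) (use assms in auto)
  then show ?thesis
    using assms card_permutations_of_set_split_hd[OF fin, of Q]
      card_permutations_of_set_split_hd[OF fin, of "\<lambda>u. hd u \<noteq> v \<and> Q u"]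
    by simp
qed

lemma card_neighbours_avoid_Some:
  assumes "finite E" "v \<notin> E"
  shows "card {u\<in>permutations_of_set (insert v E). neighbours_avoid e P v (Some x) u}
       = (if \<not> P x then card {u\<in>permutations_of_set E. u = [] \<or> \<not> P (hd u)} else 0)
         + card {u\<in>permutations_of_set (insert v E). hd u \<noteq> v \<and> neighbours_avoid e P v None u}"
proof -
  have "neighbours_avoid e P v (Some x) u = neighbours_avoid e P v None u"
    if "u \<in> permutations_of_set (insert v E)" "hd u \<noteq> v" for u
    using that by (cases u) (auto dest: permutations_of_setD)
  then have "card {u\<in>permutations_of_set (insert v E). hd u \<noteq> v \<and> neighbours_avoid e P v (Some x) u}
      = card {u\<in>permutations_of_set (insert v E). hd u \<noteq> v \<and> neighbours_avoid e P v None u}"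
    by (intro arg_cong[where f = card] Collect_cong) auto
  then show ?thesis
    using card_permutations_of_set_insert_split_hd[OF assms, of "neighbours_avoid e P v (Some x)"]
    by simp
qed

lemma card_neighbours_avoid_not_hd_rec:
  assumes "finite D" "v \<notin> D"
  shows "card {u\<in>permutations_of_set (insert v D). hd u \<noteq> v \<and> neighbours_avoid e P v None u}
       = (\<Sum>x\<in>D. (if \<not> P x then card {u\<in>permutations_of_set (D - {x}). u = [] \<or> \<not> P (hd u)} else 0)
         + card {u\<in>permutations_of_set (insert v (D - {x})). hd u \<noteq> v \<and> neighbours_avoid e P v None u})"
proof -
  have "card {u\<in>permutations_of_set (insert v D). hd u \<noteq> v \<and> neighbours_avoid e P v None u}
      = (\<Sum>y\<in>D. card {w\<in>permutations_of_set (insert v (D - {y})). neighbours_avoid e P v (Some y) w})"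
  proof -
    have fin: "finite (insert v D)" using assms by simp
    have "card {u\<in>permutations_of_set (insert v D). hd u \<noteq> v \<and> neighbours_avoid e P v None u}
      = (\<Sum>y\<in>D. card {w\<in>permutations_of_set (insert v D - {y}).
           hd (y # w) \<noteq> v \<and> neighbours_avoid e P v None (y # w)})"
      using card_permutations_of_set_split_hd[OF fin] assms by (simp add: sum.insert)
    moreover have "insert v D - {y} = insert v (D - {y})" "y \<noteq> v" if "y \<in> D" for y
      using that assms by auto
    ultimately show ?thesis by simp
  qed
  also have "\<dots> = (\<Sum>x\<in>D. (if \<not> P x then card {u\<in>permutations_of_set (D - {x}). u = [] \<or> \<not> P (hd u)} else 0)
         + card {u\<in>permutations_of_set (insert v (D - {x})). hd u \<noteq> v \<and> neighbours_avoid e P v None u})"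
    by (intro sum.cong refl card_neighbours_avoid_Some) (use assms in auto)
  finally show ?thesis .
qed

lemma sum_card_remove_squares:
  assumes "finite D"
  shows "(\<Sum>x\<in>D. (if \<not> P x then card {y\<in>D - {x}. \<not> P y} else 0) + card {y\<in>D - {x}. \<not> P y}^2)
       = card {x\<in>D. \<not> P x}^2 * (card D - 1)"
proof -
  define g where "g = card {x\<in>D. \<not> P x}"
  have "card {y\<in>D - {x}. \<not> P y} = (if \<not> P x then g - 1 else g)" if "x \<in> D" for x
  proof -
    have "{y\<in>D - {x}. \<not> P y} = {y\<in>D. \<not> P y} - {x}" by auto
    then show ?thesis unfolding g_def using that assms by (simp add: card_Diff_singleton_if)
  qed
  then have "(\<Sum>x\<in>D. (if \<not> P x then card {y\<in>D - {x}. \<not> P y} else 0) + card {y\<in>D - {x}. \<not> P y}^2)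
      = (\<Sum>x\<in>D. if \<not> P x then (g - 1) + (g - 1)^2 else g^2)"
    by (intro sum.cong) auto
  also have "\<dots> = g * ((g - 1) + (g - 1)^2) + card {x\<in>D. P x} * g^2"
    using assms unfolding g_def by (simp add: sum.If_cases Int_def conj_commute)
  also have "\<dots> = g^2 * (card D - 1)"
  proof (cases g)
    case (Suc h)
    have "card {x\<in>D. P x} + g = card D"
      unfolding g_def using assms by (subst card_Un_disjoint[symmetric]) (auto intro: arg_cong[where f = card])
    then have "card D - 1 = card {x\<in>D. P x} + h" using Suc by simp
    then show ?thesis using Suc by (simp add: power2_eq_square algebra_simps)
  qed simp
  finally show ?thesis unfolding g_def .
qed

lemma card_neighbours_avoid_not_hd_step:
  assumes "finite D" "v \<notin> D" "2 \<le> card D"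
    and IH: "\<And>x. x \<in> D \<Longrightarrow>
      card {u\<in>permutations_of_set (insert v (D - {x})). hd u \<noteq> v \<and> neighbours_avoid e P v None u}
        = card {y\<in>D - {x}. \<not> P y}^2 * fact (card D - 2)"
  shows "card {u\<in>permutations_of_set (insert v D). hd u \<noteq> v \<and> neighbours_avoid e P v None u}
       = card {x\<in>D. \<not> P x}^2 * fact (card D - 1)"
proof -
  define f :: nat where "f = fact (card D - 2)"
  have H: "card {u\<in>permutations_of_set (D - {x}). u = [] \<or> \<not> P (hd u)} = card {y\<in>D - {x}. \<not> P y} * f"
    if "x \<in> D" for x
  proof -
    have "D - {x} \<noteq> {}"
    proof
      assume "D - {x} = {}"
      then have "card D \<le> card {x}" using card_mono[of "{x}" D] by auto
      then show False using assms(3) by simp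
    qed
    then show ?thesis
      using card_permutations_of_set_hd_not[of "D - {x}" P] assms(1) that unfolding f_def
      by (simp add: numeral_2_eq_2)
  qed
  have "card {u\<in>permutations_of_set (insert v D). hd u \<noteq> v \<and> neighbours_avoid e P v None u}
      = (\<Sum>x\<in>D. ((if \<not> P x then card {y\<in>D - {x}. \<not> P y} else 0) + card {y\<in>D - {x}. \<not> P y}^2) * f)"
    unfolding card_neighbours_avoid_not_hd_rec[OF assms(1,2)]
    by (intro sum.cong refl) (simp add: H IH f_def add_mult_distrib)
  also have "\<dots> = card {x\<in>D. \<not> P x}^2 * ((card D - 1) * f)"
    unfolding sum_distrib_right[symmetric] sum_card_remove_squares[OF assms(1)] by simp
  also have "(card D - 1) * f = fact (card D - 1)"
  proof -
    have "card D - 1 = Suc (card D - 2)" using assms(3) by simp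
    then show ?thesis unfolding f_def by (simp only: fact_Suc of_nat_id)
  qed
  finally show ?thesis .
qed

lemma card_neighbours_avoid_not_hd:
  assumes "finite D" "v \<notin> D"
  shows "card {u\<in>permutations_of_set (insert v D). hd u \<noteq> v \<and> neighbours_avoid e P v None u}
       = card {x\<in>D. \<not> P x}^2 * fact (card D - 1)"
  using assms
proof (induction "card D" arbitrary: D rule: less_induct)
  case less
  consider "D = {}" | x where "D = {x}" | "card D \<ge> 2"
  proof -
    consider "card D = 0" | "card D = 1" | "card D \<ge> 2" by linarith
    then show thesis using that less.prems(1) by cases (auto simp: card_1_singleton_iff)
  qed
  then show ?case
  proof cases
    case 1
    then show ?thesis by (auto simp: permutations_of_set_singleton)
  next
    case (2 x)
    then have "{u\<in>permutations_of_set (insert v D). hd u \<noteq> v \<and> neighbours_avoid e P v None u}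
        = (if P x then {} else {[x, v]})"
      using less.prems(2) by (auto simp: permutations_of_set_doubleton)
    moreover have "{y\<in>D. \<not> P y} = (if P x then {} else {x})" using 2 by auto
    ultimately show ?thesis using 2 by simp
  next
    case 3
    show ?thesis
    proof (rule card_neighbours_avoid_not_hd_step[OF less.prems 3])
      fix x assume "x \<in> D"
      then have "card (D - {x}) < card D" "card (D - {x}) - 1 = card D - 2"
        using less.prems(1) 3 by (auto simp: card_Diff1_less)
      then show "card {u\<in>permutations_of_set (insert v (D - {x})). hd u \<noteq> v \<and> neighbours_avoid e P v None u}
          = card {y\<in>D - {x}. \<not> P y}^2 * fact (card D - 2)"
        using less.hyps[of "D - {x}"] less.prems by simp
    qed
  qed
qed

lemma card_neighbours_avoid:
  assumes "finite D" "v \<notin> D" "D \<noteq> {}"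
  shows "card {u\<in>permutations_of_set (insert v D). neighbours_avoid e P v None u}
       = (card {x\<in>D. \<not> P x}^2 + (if e then card {x\<in>D. \<not> P x} else 0)) * fact (card D - 1)"
proof -
  have "card {u\<in>permutations_of_set D. neighbours_avoid e P v None (v # u)}
      = (if e then card {u\<in>permutations_of_set D. u = [] \<or> \<not> P (hd u)} else 0)"
    by (cases e) simp_all
  then show ?thesis
    using card_permutations_of_set_insert_split_hd[OF assms(1,2), of "neighbours_avoid e P v None"]
      card_neighbours_avoid_not_hd[OF assms(1,2)] card_permutations_of_set_hd_not[OF assms(1,3)]
    by (simp add: add_mult_distrib)
qed

lemma card_neighbours_avoid_filter:
  assumes "finite A" "v \<in> A" "D \<subseteq> A - {v}" "D \<noteq> {}"
  shows "card {w\<in>permutations_of_set A. neighbours_avoid e P v None (filter (\<lambda>x. x \<in> insert v D) w)}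
           * (card D * (card D + 1))
       = fact (card A) * (card {x\<in>D. \<not> P x}^2 + (if e then card {x\<in>D. \<not> P x} else 0))"
    (is "?N * _ = _ * ?c")
proof -
  have D: "finite D" "v \<notin> D" using assms(1,3) finite_subset by auto
  have C: "insert v D \<subseteq> A" "card (insert v D) = card D + 1" using assms D by auto
  from card_permutations_of_set_filter[OF assms(1) C(1), of "neighbours_avoid e P v None"]
  have "?N * fact (card D + 1) = fact (card A) * (?c * fact (card D - 1))"
    unfolding C(2) card_neighbours_avoid[OF D assms(4)] .
  moreover have "fact (card D + 1) = (card D * (card D + 1)) * fact (card D - 1)"
    using assms(4) D(1) fact_reduce[of "card D", where 'a = nat] by (auto simp: card_gt_0_iff algebra_simps)
  ultimately show ?thesis by (simp add: mult.assoc mult.left_commute[of _ "fact (card D - 1)"])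
qed

lemma ex_between_less_Suc:
  "(\<exists>l. j < l \<and> l < Suc n \<and> Q l) \<longleftrightarrow> (\<exists>l. j < l \<and> l < n \<and> Q l) \<or> (j < n \<and> Q n)"
  by (auto simp: less_Suc_eq)

lemma all_between_less_Suc:
  "(\<forall>l. j < l \<and> l < Suc n \<longrightarrow> Q l) \<longleftrightarrow> (\<forall>l. j < l \<and> l < n \<longrightarrow> Q l) \<and> (j < n \<longrightarrow> Q n)"
  by (auto simp: less_Suc_eq)

lemma followed_iff_last_filter:
  assumes "\<And>x. \<not> (B x \<and> G x)"
  shows "(\<forall>j<length xs. B (xs!j) \<longrightarrow> (\<exists>l. j < l \<and> l < length xs \<and> G (xs!l)))
     \<longleftrightarrow> (filter (\<lambda>x. B x \<or> G x) xs = [] \<or> \<not> B (last (filter (\<lambda>x. B x \<or> G x) xs)))"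
proof (induction xs rule: rev_induct)
  case (snoc x xs)
  have "(\<forall>j<length (xs @ [x]). B ((xs @ [x])!j) \<longrightarrow> (\<exists>l. j < l \<and> l < length (xs @ [x]) \<and> G ((xs @ [x])!l)))
      \<longleftrightarrow> \<not> B x \<and> (G x \<or> (\<forall>j<length xs. B (xs!j) \<longrightarrow> (\<exists>l. j < l \<and> l < length xs \<and> G (xs!l))))"
    by (auto simp: All_less_Suc ex_between_less_Suc nth_append)
  then show ?case using snoc.IH assms by auto
qed simp

lemma last_not_followed_iff_last_filter:
  assumes "\<And>x. \<not> (B x \<and> G x)"
  shows "(\<exists>j<length xs. G (xs!j) \<and> (\<forall>l. j < l \<and> l < length xs \<longrightarrow> \<not> B (xs!l)))
     \<longleftrightarrow> (filter (\<lambda>x. B x \<or> G x) xs \<noteq> [] \<and> \<not> B (last (filter (\<lambda>x. B x \<or> G x) xs)))"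
proof (induction xs rule: rev_induct)
  case (snoc x xs)
  have "(\<exists>j<length (xs @ [x]). G ((xs @ [x])!j) \<and> (\<forall>l. j < l \<and> l < length (xs @ [x]) \<longrightarrow> \<not> B ((xs @ [x])!l)))
      \<longleftrightarrow> \<not> B x \<and> (G x \<or> (\<exists>j<length xs. G (xs!j) \<and> (\<forall>l. j < l \<and> l < length xs \<longrightarrow> \<not> B (xs!l))))"
    using assms by (auto simp: Ex_less_Suc all_between_less_Suc nth_append)
  then show ?case using snoc.IH assms by auto
qed simp

lemma preceded_iff_hd_filter:
  assumes "\<And>x. \<not> (B x \<and> G x)"
  shows "(\<forall>j<length ys. B (ys!j) \<longrightarrow> (\<exists>l<j. G (ys!l)))
     \<longleftrightarrow> (filter (\<lambda>x. B x \<or> G x) ys = [] \<or> \<not> B (hd (filter (\<lambda>x. B x \<or> G x) ys)))"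
proof (induction ys)
  case (Cons y ys)
  have "(\<forall>j<length (y # ys). B ((y # ys)!j) \<longrightarrow> (\<exists>l<j. G ((y # ys)!l)))
      \<longleftrightarrow> \<not> B y \<and> (G y \<or> (\<forall>j<length ys. B (ys!j) \<longrightarrow> (\<exists>l<j. G (ys!l))))"
    by (auto simp: All_less_Suc2 Ex_less_Suc2)
  then show ?case using Cons.IH assms by auto
qed simp

lemma all_after_conv_drop:
  "(\<forall>j. i < j \<and> j < length w \<and> B (w!j) \<longrightarrow> (\<exists>l. i < l \<and> l < j \<and> G (w!l)))
    \<longleftrightarrow> (\<forall>j<length (drop (Suc i) w). B (drop (Suc i) w ! j) \<longrightarrow> (\<exists>l<j. G (drop (Suc i) w ! l)))"
proof (intro iffI allI impI)
  fix j assume "\<forall>j. i < j \<and> j < length w \<and> B (w!j) \<longrightarrow> (\<exists>l. i < l \<and> l < j \<and> G (w!l))"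
    and "j < length (drop (Suc i) w)" "B (drop (Suc i) w ! j)"
  moreover have "i < Suc i + j \<and> Suc i + j < length w \<and> B (w ! (Suc i + j))"
    using \<open>j < length (drop (Suc i) w)\<close> \<open>B (drop (Suc i) w ! j)\<close> by auto
  ultimately obtain l where "i < l" "l < Suc i + j" "G (w!l)" by blast
  then show "\<exists>l<j. G (drop (Suc i) w ! l)"
    using \<open>j < length (drop (Suc i) w)\<close> by (intro exI[of _ "l - Suc i"]) auto
next
  fix j assume "\<forall>j<length (drop (Suc i) w). B (drop (Suc i) w ! j) \<longrightarrow> (\<exists>l<j. G (drop (Suc i) w ! l))"
    and "i < j \<and> j < length w \<and> B (w!j)"
  moreover have "j - Suc i < length (drop (Suc i) w) \<and> B (drop (Suc i) w ! (j - Suc i))"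
    using \<open>i < j \<and> j < length w \<and> B (w!j)\<close> by auto
  ultimately obtain l where "l < j - Suc i" "G (w ! (Suc i + l))"
    using \<open>i < j \<and> j < length w \<and> B (w!j)\<close> by auto
  then show "\<exists>l. i < l \<and> l < j \<and> G (w!l)" by (intro exI[of _ "Suc i + l"]) auto
qed

lemma all_before_conv_take:
  assumes "i < length w"
  shows "(\<forall>j<i. B (w!j) \<longrightarrow> (\<exists>l. j < l \<and> l < i \<and> G (w!l)))
    \<longleftrightarrow> (\<forall>j<length (take i w). B (take i w ! j) \<longrightarrow> (\<exists>l. j < l \<and> l < length (take i w) \<and> G (take i w ! l)))"
  using assms by (auto simp: min_def) (metis nth_take)+

lemma ex_before_conv_take:
  assumes "i < length w"
  shows "(\<exists>j<i. G (w!j) \<and> (\<forall>l. j < l \<and> l < i \<longrightarrow> \<not> B (w!l)))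
    \<longleftrightarrow> (\<exists>j<length (take i w). G (take i w ! j) \<and> (\<forall>l. j < l \<and> l < length (take i w) \<longrightarrow> \<not> B (take i w ! l)))"
  using assms by (auto simp: min_def)

lemma neighbours_avoid_filter_nth:
  fixes B G :: "'a \<Rightarrow> bool" and w :: "'a list"
  assumes "distinct w" "i < length w"
  defines "L \<equiv> filter (\<lambda>x. B x \<or> G x) (take i w)" and "R \<equiv> filter (\<lambda>x. B x \<or> G x) (drop (Suc i) w)"
  shows "neighbours_avoid e B (w!i) None (filter (\<lambda>x. B x \<or> G x \<or> x = w!i) w)
     \<longleftrightarrow> (if L = [] then e else \<not> B (last L)) \<and> (R = [] \<or> \<not> B (hd R))"
proof -
  have w: "w = take i w @ w!i # drop (Suc i) w" using assms(2) by (simp add: id_take_nth_drop)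
  then have "distinct (take i w @ w!i # drop (Suc i) w)" using assms(1) by simp
  then have "w!i \<notin> set (take i w)" "w!i \<notin> set (drop (Suc i) w)" by auto
  then have "filter (\<lambda>x. B x \<or> G x \<or> x = w!i) (take i w) = L"
    "filter (\<lambda>x. B x \<or> G x \<or> x = w!i) (drop (Suc i) w) = R" "w!i \<notin> set L"
    unfolding L_def R_def by (auto intro: filter_cong)
  moreover have "filter (\<lambda>x. B x \<or> G x \<or> x = w!i) w
      = filter (\<lambda>x. B x \<or> G x \<or> x = w!i) (take i w @ w!i # drop (Suc i) w)"
    using w by simp
  ultimately have "filter (\<lambda>x. B x \<or> G x \<or> x = w!i) w = L @ w!i # R" "w!i \<notin> set L"
    by simp_all
  then show ?thesis by (simp add: neighbours_avoid_append)
qed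

section \<open>k-peaks and k-valleys\<close>

text \<open>A k-valley, unlike a k-peak, needs a witness on its left: k-alternating sequences start
  with a descent.\<close>

definition k_peak :: "nat \<Rightarrow> nat list \<Rightarrow> nat \<Rightarrow> bool" where
  "k_peak k w i \<longleftrightarrow>
     (\<forall>j<i. w!i < w!j \<longrightarrow> (\<exists>l. j < l \<and> l < i \<and> w!l + k \<le> w!i)) \<and>
     (\<forall>j. i < j \<and> j < length w \<and> w!i < w!j \<longrightarrow> (\<exists>l. i < l \<and> l < j \<and> w!l + k \<le> w!i))"

definition k_valley :: "nat \<Rightarrow> nat list \<Rightarrow> nat \<Rightarrow> bool" where
  "k_valley k w i \<longleftrightarrow>
     (\<exists>j<i. w!i + k \<le> w!j \<and> (\<forall>l. j < l \<and> l < i \<longrightarrow> w!i \<le> w!l)) \<and>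
     (\<forall>j. i < j \<and> j < length w \<and> w!j < w!i \<longrightarrow> (\<exists>l. i < l \<and> l < j \<and> w!i + k \<le> w!l))"

lemma k_peakD:
  assumes "k_peak k w i"
  shows "j < i \<Longrightarrow> w!i < w!j \<Longrightarrow> \<exists>l. j < l \<and> l < i \<and> w!l + k \<le> w!i"
    and "i < j \<Longrightarrow> j < length w \<Longrightarrow> w!i < w!j \<Longrightarrow> \<exists>l. i < l \<and> l < j \<and> w!l + k \<le> w!i"
  using assms unfolding k_peak_def by blast+

lemma k_valleyD:
  assumes "k_valley k w i"
  shows "\<exists>j<i. w!i + k \<le> w!j \<and> (\<forall>l. j < l \<and> l < i \<longrightarrow> w!i \<le> w!l)"
    and "i < j \<Longrightarrow> j < length w \<Longrightarrow> w!j < w!i \<Longrightarrow> \<exists>l. i < l \<and> l < j \<and> w!i + k \<le> w!l"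
  using assms unfolding k_valley_def by blast+

lemma k_peak_iff_neighbours_avoid:
  assumes "distinct w" "i < length w"
  shows "k_peak k w i \<longleftrightarrow>
    neighbours_avoid True (\<lambda>x. w!i < x) (w!i) None (filter (\<lambda>x. w!i < x \<or> x + k \<le> w!i \<or> x = w!i) w)"
proof -
  define B where "B = (\<lambda>x. w!i < x)"
  define G where "G = (\<lambda>x. x + k \<le> w!i)"
  have disj: "\<And>x. \<not> (B x \<and> G x)" unfolding B_def G_def by auto
  have "k_peak k w i \<longleftrightarrow> (\<forall>j<i. B (w!j) \<longrightarrow> (\<exists>l. j < l \<and> l < i \<and> G (w!l))) \<and>
     (\<forall>j. i < j \<and> j < length w \<and> B (w!j) \<longrightarrow> (\<exists>l. i < l \<and> l < j \<and> G (w!l)))"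
    unfolding k_peak_def B_def G_def ..
  also have "\<dots> \<longleftrightarrow> (filter (\<lambda>x. B x \<or> G x) (take i w) = [] \<or> \<not> B (last (filter (\<lambda>x. B x \<or> G x) (take i w)))) \<and>
     (filter (\<lambda>x. B x \<or> G x) (drop (Suc i) w) = [] \<or> \<not> B (hd (filter (\<lambda>x. B x \<or> G x) (drop (Suc i) w))))"
    unfolding all_before_conv_take[OF assms(2), of B G] all_after_conv_drop[of i w B G]
      followed_iff_last_filter[of B G, OF disj] preceded_iff_hd_filter[of B G, OF disj] ..
  also have "\<dots> \<longleftrightarrow> neighbours_avoid True B (w!i) None (filter (\<lambda>x. B x \<or> G x \<or> x = w!i) w)"
    unfolding neighbours_avoid_filter_nth[OF assms] by simp
  finally show ?thesis unfolding B_def G_def .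
qed

lemma k_valley_iff_neighbours_avoid:
  assumes "distinct w" "i < length w"
  shows "k_valley k w i \<longleftrightarrow>
    neighbours_avoid False (\<lambda>x. x < w!i) (w!i) None (filter (\<lambda>x. x < w!i \<or> w!i + k \<le> x \<or> x = w!i) w)"
proof -
  define B where "B = (\<lambda>x. x < w!i)"
  define G where "G = (\<lambda>x. w!i + k \<le> x)"
  have disj: "\<And>x. \<not> (B x \<and> G x)" unfolding B_def G_def by auto
  have "k_valley k w i \<longleftrightarrow> (\<exists>j<i. G (w!j) \<and> (\<forall>l. j < l \<and> l < i \<longrightarrow> \<not> B (w!l))) \<and>
     (\<forall>j. i < j \<and> j < length w \<and> B (w!j) \<longrightarrow> (\<exists>l. i < l \<and> l < j \<and> G (w!l)))"
    unfolding k_valley_def B_def G_def not_less ..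
  also have "\<dots> \<longleftrightarrow> (filter (\<lambda>x. B x \<or> G x) (take i w) \<noteq> [] \<and> \<not> B (last (filter (\<lambda>x. B x \<or> G x) (take i w)))) \<and>
     (filter (\<lambda>x. B x \<or> G x) (drop (Suc i) w) = [] \<or> \<not> B (hd (filter (\<lambda>x. B x \<or> G x) (drop (Suc i) w))))"
    unfolding ex_before_conv_take[OF assms(2), of G B] all_after_conv_drop[of i w B G]
      last_not_followed_iff_last_filter[of B G, OF disj] preceded_iff_hd_filter[of B G, OF disj] ..
  also have "\<dots> \<longleftrightarrow> neighbours_avoid False B (w!i) None (filter (\<lambda>x. B x \<or> G x \<or> x = w!i) w)"
    unfolding neighbours_avoid_filter_nth[OF assms] by simp
  finally show ?thesis unfolding B_def G_def .
qed

lemma ex_argmax_interval: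
  fixes f :: "nat \<Rightarrow> 'a :: linorder"
  assumes "lo < hi"
  shows "\<exists>r. lo \<le> r \<and> r < hi \<and> (\<forall>l. lo \<le> l \<and> l < hi \<longrightarrow> f l \<le> f r)"
proof -
  obtain r where "r \<in> {lo..<hi}" "f r = Max (f ` {lo..<hi})"
    using Max_in[of "f ` {lo..<hi}"] assms by fastforce
  then show ?thesis by (intro exI[of _ r]) auto
qed

lemma k_peak_of_window_max:
  assumes "lo \<le> r" "r < hi" "hi \<le> length w"
    and "\<forall>l. lo \<le> l \<and> l < hi \<longrightarrow> w!l \<le> w!r"
    and "lo = 0 \<or> w!(lo - 1) + k \<le> w!r" "hi = length w \<or> w!hi + k \<le> w!r"
  shows "k_peak k w r"
  unfolding k_peak_def
proof (intro conjI allI impI)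
  fix j assume j: "j < r" "w!r < w!j"
  have "j < lo"
  proof (rule ccontr)
    assume "\<not> j < lo"
    then have "w!j \<le> w!r" using assms(2,4) j(1) by auto
    then show False using j(2) by simp
  qed
  then have "j < lo - 1 \<and> lo - 1 < r \<and> w!(lo - 1) + k \<le> w!r"
    using assms(1,5) j by (cases "j = lo - 1") auto
  then show "\<exists>l. j < l \<and> l < r \<and> w!l + k \<le> w!r" by blast
next
  fix j assume j: "r < j \<and> j < length w \<and> w!r < w!j"
  have "hi \<le> j"
  proof (rule ccontr)
    assume "\<not> hi \<le> j"
    then have "w!j \<le> w!r" using assms(1,4) j by auto
    then show False using j by simp
  qed
  then have "r < hi \<and> hi < j \<and> w!hi + k \<le> w!r"
    using assms(2,6) j by (cases "j = hi") auto
  then show "\<exists>l. r < l \<and> l < j \<and> w!l + k \<le> w!r" by blast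
qed

lemma k_valley_of_window_min:
  assumes "lo \<le> r" "r < hi" "hi \<le> length w"
    and "\<forall>l. lo \<le> l \<and> l < hi \<longrightarrow> w!r \<le> w!l"
    and "0 < lo" "w!r + k \<le> w!(lo - 1)" "hi = length w \<or> w!r + k \<le> w!hi"
  shows "k_valley k w r"
  unfolding k_valley_def
proof (intro conjI allI impI)
  show "\<exists>j<r. w!r + k \<le> w!j \<and> (\<forall>l. j < l \<and> l < r \<longrightarrow> w!r \<le> w!l)"
    using assms by (intro exI[of _ "lo - 1"]) auto
next
  fix j assume j: "r < j \<and> j < length w \<and> w!j < w!r"
  have "hi \<le> j"
  proof (rule ccontr)
    assume "\<not> hi \<le> j"
    then have "w!r \<le> w!j" using assms(1,4) j by auto
    then show False using j by simp
  qed
  then have "r < hi \<and> hi < j \<and> w!r + k \<le> w!hi"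
    using assms(2,7) j by (cases "j = hi") auto
  then show "\<exists>l. r < l \<and> l < j \<and> w!r + k \<le> w!l" by blast
qed

lemma ex_k_peak_in_window:
  assumes "lo \<le> p" "p < hi" "hi \<le> length w"
    and "lo = 0 \<or> w!(lo - 1) + k \<le> w!p" "hi = length w \<or> w!hi + k \<le> w!p"
  shows "\<exists>r. lo \<le> r \<and> r < hi \<and> k_peak k w r"
proof -
  obtain r where r: "lo \<le> r" "r < hi" "\<forall>l. lo \<le> l \<and> l < hi \<longrightarrow> w!l \<le> w!r"
    using ex_argmax_interval[of lo hi "nth w"] assms(1,2) by auto
  have "w!p \<le> w!r" using r(3) assms(1,2) by auto
  then have "k_peak k w r" using r assms by (intro k_peak_of_window_max) auto
  with r show ?thesis by blast
qed

lemma ex_k_valley_in_window: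
  assumes "lo \<le> p" "p < hi" "hi \<le> length w"
    and "0 < lo" "w!p + k \<le> w!(lo - 1)" "hi = length w \<or> w!p + k \<le> w!hi"
  shows "\<exists>r. lo \<le> r \<and> r < hi \<and> k_valley k w r"
proof -
  obtain r where r: "lo \<le> r \<and> r < hi" "\<forall>l. lo \<le> l \<and> l < hi \<longrightarrow> w!r \<le> w!l"
    using ex_has_least_nat[of "\<lambda>i. lo \<le> i \<and> i < hi" p "nth w"] assms(1,2) by auto
  have "w!r \<le> w!p" using r(2) assms(1,2) by auto
  then have "k_valley k w r" using r assms by (intro k_valley_of_window_min) auto
  with r show ?thesis by blast
qed

lemma k_peak_not_k_valley:
  assumes "k_peak k w i" "1 \<le> k"
  shows "\<not> k_valley k w i"
proof
  assume "k_valley k w i"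
  then obtain j where j: "j < i" "w!i + k \<le> w!j" "\<forall>l. j < l \<and> l < i \<longrightarrow> w!i \<le> w!l"
    using k_valleyD(1) by blast
  have "w!i < w!j" using j(2) assms(2) by simp
  then obtain l where "j < l" "l < i" "w!l + k \<le> w!i"
    using k_peakD(1)[OF assms(1) j(1)] by blast
  then show False using j(3) assms(2) by fastforce
qed

lemma k_peak_next_not_k_peak:
  assumes "a < b" "b < length w" "w!a \<noteq> w!b"
    and none: "\<forall>c. a < c \<and> c < b \<longrightarrow> \<not> k_valley k w c"
    and "k_peak k w a"
  shows "\<not> k_peak k w b"
proof
  assume "k_peak k w b"
  obtain l where l: "a < l" "l < b" "w!l + k \<le> w!a" "w!l + k \<le> w!b"
  proof (cases "w!a < w!b")
    case True
    then obtain l where "a < l" "l < b" "w!l + k \<le> w!a"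
      using k_peakD(2)[OF \<open>k_peak k w a\<close> assms(1,2)] by blast
    then show ?thesis using that True by simp
  next
    case False
    then have "w!b < w!a" using assms(3) by simp
    then obtain l where "a < l" "l < b" "w!l + k \<le> w!b"
      using k_peakD(1)[OF \<open>k_peak k w b\<close> assms(1)] by blast
    then show ?thesis using that \<open>w!b < w!a\<close> by simp
  qed
  then obtain r where "Suc a \<le> r" "r < b" "k_valley k w r"
    using ex_k_valley_in_window[of "Suc a" l b w k] assms(2) by auto
  then show False using none by auto
qed

lemma k_peak_next_k_valley_le:
  assumes "a < b" "b < length w"
    and none: "\<forall>c. a < c \<and> c < b \<longrightarrow> \<not> k_peak k w c"
    and peak: "k_peak k w a" and valley: "k_valley k w b"
  shows "w!b + k \<le> w!a"
proof (rule ccontr)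
  assume far: "\<not> w!b + k \<le> w!a"
  obtain j where j: "j < b" "w!b + k \<le> w!j" "\<forall>l. j < l \<and> l < b \<longrightarrow> w!b \<le> w!l"
    using k_valleyD(1)[OF valley] by blast
  have "w!a < w!j" using j(2) far by simp
  consider "j = a" | "j < a" | "a < j" by linarith
  then show False
  proof cases
    case 1
    then show False using j(2) far by simp
  next
    case 2
    then obtain l where "j < l" "l < a" "w!l + k \<le> w!a"
      using k_peakD(1)[OF peak _ \<open>w!a < w!j\<close>] by blast
    moreover have "w!b \<le> w!l" using j(3) \<open>j < l\<close> \<open>l < a\<close> assms(1) by simp
    ultimately show False using far by simp
  next
    case 3
    then obtain l where l: "a < l" "l < j" "w!l + k \<le> w!a"
      using k_peakD(2)[OF peak _ _ \<open>w!a < w!j\<close>] j(1) assms(2) by auto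
    have "w!l + k \<le> w!j" using l(3) \<open>w!a < w!j\<close> by simp
    then obtain r where "Suc l \<le> r" "r < b" "k_peak k w r"
      using ex_k_peak_in_window[of "Suc l" j b w k] l(2) j(1,2) assms(2) by auto
    then show False using none l(1) by auto
  qed
qed

lemma k_valley_next_not_k_valley:
  assumes "a < b" "b < length w" "w!a \<noteq> w!b"
    and none: "\<forall>c. a < c \<and> c < b \<longrightarrow> \<not> k_peak k w c"
    and "k_valley k w a"
  shows "\<not> k_valley k w b"
proof
  assume "k_valley k w b"
  obtain l where l: "a < l" "l < b" "w!a + k \<le> w!l" "w!b + k \<le> w!l"
  proof (cases "w!b < w!a")
    case True
    then obtain l where "a < l" "l < b" "w!a + k \<le> w!l"
      using k_valleyD(2)[OF \<open>k_valley k w a\<close> assms(1,2)] by blast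
    then show ?thesis using that True by simp
  next
    case False
    then have lt: "w!a < w!b" using assms(3) by simp
    obtain j where j: "j < b" "w!b + k \<le> w!j" "\<forall>l. j < l \<and> l < b \<longrightarrow> w!b \<le> w!l"
      using k_valleyD(1)[OF \<open>k_valley k w b\<close>] by blast
    have "\<not> j < a" using j(3) assms(1) lt by auto
    moreover have "j \<noteq> a" using j(2) lt by auto
    ultimately have "a < j" by simp
    then show ?thesis using that j lt by simp
  qed
  then obtain r where "Suc a \<le> r" "r < b" "k_peak k w r"
    using ex_k_peak_in_window[of "Suc a" l b w k] assms(2) by auto
  then show False using none by auto
qed

lemma k_valley_next_k_peak_le:
  assumes "a < b" "b < length w"
    and none: "\<forall>c. a < c \<and> c < b \<longrightarrow> \<not> k_peak k w c"
    and valley: "k_valley k w a" and peak: "k_peak k w b"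
  shows "w!a + k \<le> w!b"
proof (rule ccontr)
  assume near: "\<not> w!a + k \<le> w!b"
  obtain l where l: "a < l" "l < b" "w!l < w!a"
  proof (cases "w!b < w!a")
    case True
    then obtain l where "a < l" "l < b" "w!l + k \<le> w!b"
      using k_peakD(1)[OF peak assms(1)] by blast
    then show ?thesis using that True by simp
  next
    case False
    obtain j where j: "j < a" "w!a + k \<le> w!j" "\<forall>l. j < l \<and> l < a \<longrightarrow> w!a \<le> w!l"
      using k_valleyD(1)[OF valley] by blast
    have "w!b < w!j" using j(2) near by simp
    moreover have "j < b" using j(1) assms(1) by simp
    ultimately obtain l where l: "j < l" "l < b" "w!l + k \<le> w!b"
      using k_peakD(1)[OF peak] by blast
    then have "w!l < w!a" using near by simp
    moreover have "\<not> l \<le> a" using j(3) l(1) \<open>w!l < w!a\<close> by (auto simp: le_less)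
    ultimately show ?thesis using that l(2) by (simp add: not_le)
  qed
  then obtain l' where "a < l'" "l' < l" "w!a + k \<le> w!l'"
    using k_valleyD(2)[OF valley l(1) _ l(3)] l(2) assms(2) by auto
  then obtain r where "Suc a \<le> r" "r < l" "k_peak k w r"
    using ex_k_peak_in_window[of "Suc a" l' l w k] l assms(2) by auto
  then show False using none l by auto
qed

section \<open>The k-alternating length\<close>

lemma subseq_map_nth_take:
  assumes "sorted_wrt (<) ps" "\<forall>i\<in>set ps. i < n" "n \<le> length w"
  shows "subseq (map (nth w) ps) (take n w)"
  using assms
proof (induction ps arbitrary: n rule: rev_induct)
  case (snoc i ps)
  have "subseq (map (nth w) ps) (take i w)"
    using snoc.prems by (intro snoc.IH) (auto simp: sorted_wrt_append)
  then have "subseq (map (nth w) ps @ [w!i]) (take i w @ [w!i])"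
    by (rule list_emb_append_mono) simp
  also have "take i w @ [w!i] = take (Suc i) (take n w)"
    using snoc.prems by (simp add: take_Suc_conv_app_nth)
  also have "subseq \<dots> (take n w)"
    by (rule prefix_imp_subseq[OF take_is_prefix])
  finally show ?case by simp
qed simp

lemma subseq_iff_map_nth:
  "subseq xs w \<longleftrightarrow> (\<exists>ps. sorted_wrt (<) ps \<and> (\<forall>i\<in>set ps. i < length w) \<and> xs = map (nth w) ps)"
proof
  assume "subseq xs w"
  then show "\<exists>ps. sorted_wrt (<) ps \<and> (\<forall>i\<in>set ps. i < length w) \<and> xs = map (nth w) ps"
  proof (induction rule: list_emb.induct)
    case (list_emb_Nil ys)
    then show ?case by (intro exI[of _ "[]"]) simp
  next
    case (list_emb_Cons xs ys y)
    then obtain ps where "sorted_wrt (<) ps" "\<forall>i\<in>set ps. i < length ys" "xs = map (nth ys) ps"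
      by blast
    then show ?case by (intro exI[of _ "map Suc ps"]) (auto simp: sorted_wrt_map)
  next
    case (list_emb_Cons2 x y xs ys)
    then obtain ps where "sorted_wrt (<) ps" "\<forall>i\<in>set ps. i < length ys" "xs = map (nth ys) ps"
      by blast
    then show ?case using list_emb_Cons2.hyps by (intro exI[of _ "0 # map Suc ps"]) (auto simp: sorted_wrt_map)
  qed
next
  assume "\<exists>ps. sorted_wrt (<) ps \<and> (\<forall>i\<in>set ps. i < length w) \<and> xs = map (nth w) ps"
  then show "subseq xs w" using subseq_map_nth_take[of _ "length w" w] by auto
qed

lemma k_alternatingI:
  assumes "1 \<le> k"
    and "\<And>t. Suc t < length xs \<Longrightarrow> even t \<Longrightarrow> xs!Suc t + k \<le> xs!t"
    and "\<And>t. Suc t < length xs \<Longrightarrow> odd t \<Longrightarrow> xs!t + k \<le> xs!Suc t"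
  shows "k_alternating k xs"
  unfolding k_alternating_def
proof (intro allI impI)
  fix t assume "Suc t < length xs"
  then show "(if even t then xs!t > xs!Suc t else xs!t < xs!Suc t) \<and> int k \<le> \<bar>int (xs!t) - int (xs!Suc t)\<bar>"
    using assms by (cases "even t") (fastforce+)
qed

lemma k_alternating_step:
  assumes "k_alternating k xs" "Suc t < length xs"
  shows "even t \<Longrightarrow> xs!Suc t + k \<le> xs!t" and "odd t \<Longrightarrow> xs!t + k \<le> xs!Suc t"
  using assms unfolding k_alternating_def by fastforce+

lemma ex_k_extremum_in_gap:
  assumes alt: "k_alternating k (map (nth w) ps)" and sorted: "sorted_wrt (<) ps"
    and bound: "\<forall>i\<in>set ps. i < length w" and t: "t < length ps"
  shows "\<exists>r. (0 < t \<longrightarrow> ps!(t - 1) < r) \<and> (Suc t < length ps \<longrightarrow> r < ps!Suc t) \<and> r < length w \<and>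
           (if even t then k_peak k w r else k_valley k w r)"
proof -
  define lo where "lo = (if t = 0 then 0 else Suc (ps!(t - 1)))"
  define hi where "hi = (if Suc t = length ps then length w else ps!Suc t)"
  have step: "Suc s < length ps \<Longrightarrow> even s \<Longrightarrow> w!(ps!Suc s) + k \<le> w!(ps!s)"
    "Suc s < length ps \<Longrightarrow> odd s \<Longrightarrow> w!(ps!s) + k \<le> w!(ps!Suc s)" for s
    using k_alternating_step[OF alt, of s] by simp_all
  have next_bound: "Suc t < length ps \<Longrightarrow> ps!t < ps!Suc t \<and> ps!Suc t < length w"
    using sorted_wrt_nth_less[OF sorted, of t "Suc t"] bound by simp
  have "ps!t < hi \<and> hi \<le> length w"
  proof (cases "Suc t < length ps")
    case True
    then show ?thesis using next_bound by (simp add: hi_def)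
  next
    case False
    then show ?thesis using t bound by (simp add: hi_def)
  qed
  moreover have "lo \<le> ps!t"
    using t sorted_wrt_nth_less[OF sorted, of "t - 1" t] by (simp add: lo_def Suc_le_eq)
  ultimately have window: "lo \<le> ps!t" "ps!t < hi" "hi \<le> length w" by simp_all
  have "\<exists>r. lo \<le> r \<and> r < hi \<and> (if even t then k_peak k w r else k_valley k w r)"
  proof (cases "even t")
    case True
    have "lo = 0 \<or> w!(lo - 1) + k \<le> w!(ps!t)" "hi = length w \<or> w!hi + k \<le> w!(ps!t)"
      using step[of "t - 1"] step[of t] True t by (auto simp: lo_def hi_def)
    then show ?thesis using ex_k_peak_in_window[OF window] True by simp
  next
    case False
    have "0 < lo" "w!(ps!t) + k \<le> w!(lo - 1)" "hi = length w \<or> w!(ps!t) + k \<le> w!hi"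
      using step[of "t - 1"] step[of t] False t odd_pos[of t] by (auto simp: lo_def hi_def)
    then show ?thesis using ex_k_valley_in_window[OF window] False by simp
  qed
  then obtain r where r: "lo \<le> r" "r < hi" "if even t then k_peak k w r else k_valley k w r"
    by blast
  moreover have "0 < t \<longrightarrow> ps!(t - 1) < r" using r(1) unfolding lo_def by (cases t) auto
  moreover have "Suc t < length ps \<longrightarrow> r < ps!Suc t" using r(2) unfolding hi_def by auto
  moreover have "r < length w" using r(2) window(3) by simp
  ultimately show ?thesis by blast
qed

lemma card_ge_of_parity_choice:
  fixes R :: "nat \<Rightarrow> 'a :: linorder"
  assumes incr: "\<And>t t'. t + 2 \<le> t' \<Longrightarrow> t' < L \<Longrightarrow> R t < R t'"
    and even: "\<And>t. t < L \<Longrightarrow> even t \<Longrightarrow> R t \<in> P"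
    and odd: "\<And>t. t < L \<Longrightarrow> odd t \<Longrightarrow> R t \<in> Q"
    and "finite P" "finite Q"
  shows "L \<le> card P + card Q"
proof -
  have inj: "inj_on R {t. t < L \<and> even t = b}" for b
  proof (rule inj_onI)
    fix t t' assume "t \<in> {t. t < L \<and> even t = b}" "t' \<in> {t. t < L \<and> even t = b}" "R t = R t'"
    moreover have "t = t' \<or> t + 2 \<le> t' \<or> t' + 2 \<le> t" if "even t = even t'"
      using that by presburger
    ultimately show "t = t'" using incr[of t t'] incr[of t' t] by force
  qed
  have "card {t. t < L \<and> even t = True} \<le> card P"
    using even \<open>finite P\<close> by (intro card_inj_on_le[OF inj]) auto
  moreover have "card {t. t < L \<and> even t = False} \<le> card Q"
    using odd \<open>finite Q\<close> by (intro card_inj_on_le[OF inj]) auto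
  moreover have "L = card {t. t < L \<and> even t = True} + card {t. t < L \<and> even t = False}"
  proof -
    have "{..<L} = {t. t < L \<and> even t = True} \<union> {t. t < L \<and> even t = False}" by auto
    then have "card {..<L} = card {t. t < L \<and> even t = True} + card {t. t < L \<and> even t = False}"
      by (simp add: card_Un_disjoint disjoint_iff)
    then show ?thesis by simp
  qed
  ultimately show ?thesis by linarith
qed

definition k_peaks :: "nat \<Rightarrow> nat list \<Rightarrow> nat set" where
  "k_peaks k w = {i. i < length w \<and> k_peak k w i}"

definition k_valleys :: "nat \<Rightarrow> nat list \<Rightarrow> nat set" where
  "k_valleys k w = {i. i < length w \<and> k_valley k w i}"

lemma k_alternating_length_le:
  assumes sub: "subseq xs w" and alt: "k_alternating k xs"
  shows "length xs \<le> card (k_peaks k w) + card (k_valleys k w)"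
proof -
  obtain ps where ps: "sorted_wrt (<) ps" "\<forall>i\<in>set ps. i < length w" "xs = map (nth w) ps"
    using sub unfolding subseq_iff_map_nth by blast
  obtain R where R: "\<And>t. t < length ps \<Longrightarrow> (0 < t \<longrightarrow> ps!(t - 1) < R t) \<and>
      (Suc t < length ps \<longrightarrow> R t < ps!Suc t) \<and> R t < length w \<and>
      (if even t then k_peak k w (R t) else k_valley k w (R t))"
    using ex_k_extremum_in_gap[of k w ps] alt ps by metis
  have "R t < R t'" if "t + 2 \<le> t'" "t' < length ps" for t t'
  proof -
    have "R t < ps!Suc t" "ps!(t' - 1) < R t'" using R[of t] R[of t'] that by auto
    moreover have "ps!Suc t \<le> ps!(t' - 1)"
    proof (cases "Suc t = t' - 1")
      case False
      then have "Suc t < t' - 1" "t' - 1 < length ps" using that by auto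
      then show ?thesis using sorted_wrt_nth_less[OF ps(1)] by (simp add: less_imp_le)
    qed simp
    ultimately show ?thesis by simp
  qed
  then have "length ps \<le> card (k_peaks k w) + card (k_valleys k w)"
    by (rule card_ge_of_parity_choice) (use R in \<open>auto simp: k_peaks_def k_valleys_def\<close>)
  then show ?thesis using ps(3) by simp
qed

lemma sorted_wrt_less_not_between:
  fixes xs :: "'a :: linorder list"
  assumes "sorted_wrt (<) xs" "Suc j < length xs" "xs!j < c" "c < xs!Suc j"
  shows "c \<notin> set xs"
proof
  assume "c \<in> set xs"
  then obtain m where m: "m < length xs" "xs!m = c" by (auto simp: in_set_conv_nth)
  have "\<not> m \<le> j" using sorted_wrt_nth_less[OF assms(1), of m j] assms m by (cases "m = j") auto
  moreover have "\<not> Suc j \<le> m"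
    using sorted_wrt_nth_less[OF assms(1), of "Suc j" m] assms m by (cases "m = Suc j") auto
  ultimately show False by simp
qed

lemma ex_k_peak_before_k_valley:
  assumes "k_valley k w b" "b < length w"
  shows "\<exists>c<b. k_peak k w c"
proof -
  obtain j where "j < b" "w!b + k \<le> w!j"
    using k_valleyD(1)[OF assms(1)] by blast
  then show ?thesis using ex_k_peak_in_window[of 0 j b w k] assms(2) by auto
qed

definition k_extremum_positions :: "nat \<Rightarrow> nat list \<Rightarrow> nat list" where
  "k_extremum_positions k w = sorted_list_of_set (k_peaks k w \<union> k_valleys k w)"

lemma sorted_k_extremum_positions: "sorted_wrt (<) (k_extremum_positions k w)"
  by (simp add: k_extremum_positions_def)

lemma set_k_extremum_positions:
  "set (k_extremum_positions k w) = {i. i < length w \<and> (k_peak k w i \<or> k_valley k w i)}"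
  by (auto simp: k_extremum_positions_def k_peaks_def k_valleys_def)

lemma length_k_extremum_positions:
  assumes "1 \<le> k"
  shows "length (k_extremum_positions k w) = card (k_peaks k w) + card (k_valleys k w)"
proof -
  have "k_peaks k w \<inter> k_valleys k w = {}"
    using k_peak_not_k_valley[OF _ assms] by (auto simp: k_peaks_def k_valleys_def)
  then show ?thesis
    unfolding k_extremum_positions_def by (simp add: card_Un_disjoint k_peaks_def k_valleys_def)
qed

lemma k_extremum_positions_nth:
  assumes s: "s = k_extremum_positions k w" and "j < length s"
  shows "s!j < length w" "k_peak k w (s!j) \<or> k_valley k w (s!j)"
  using nth_mem[OF assms(2)] unfolding s set_k_extremum_positions by auto

lemma k_extremum_positions_gap:
  assumes s: "s = k_extremum_positions k w" and "Suc j < length s" "s!j < c" "c < s!Suc j"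
  shows "\<not> k_peak k w c" "\<not> k_valley k w c"
proof -
  have "c \<notin> set s"
    using sorted_wrt_less_not_between[OF _ assms(2-4)] sorted_k_extremum_positions s by blast
  moreover have "c < length w" using k_extremum_positions_nth(1)[OF s assms(2)] assms(4) by simp
  ultimately show "\<not> k_peak k w c" "\<not> k_valley k w c"
    unfolding s set_k_extremum_positions by auto
qed

lemma k_peak_nth_k_extremum_positions_iff:
  assumes s: "s = k_extremum_positions k w" and "distinct w" "j < length s"
  shows "k_peak k w (s!j) \<longleftrightarrow> even j"
  using assms(3)
proof (induction j)
  case 0
  have "\<not> k_peak k w c" if "c < s!0" for c
  proof
    assume "k_peak k w c"
    moreover have "c < length w" using that k_extremum_positions_nth(1)[OF s 0] by simp
    ultimately have "c \<in> set s" unfolding s set_k_extremum_positions by simp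
    moreover have "s!0 \<le> c" if "c \<in> set s" for c
      using that sorted_k_extremum_positions[of k w] unfolding s[symmetric] by (cases s) auto
    ultimately show False using \<open>c < s!0\<close> by fastforce
  qed
  then show ?case
    using k_extremum_positions_nth[OF s 0] ex_k_peak_before_k_valley[of k w "s!0"] by auto
next
  case (Suc j)
  have gap: "\<forall>c. s!j < c \<and> c < s!Suc j \<longrightarrow> \<not> k_peak k w c \<and> \<not> k_valley k w c"
    using k_extremum_positions_gap[OF s Suc.prems] by blast
  have less: "s!j < s!Suc j"
    using sorted_k_extremum_positions[of k w] Suc.prems unfolding s[symmetric] by (simp add: sorted_wrt_nth_less)
  have "w!(s!j) \<noteq> w!(s!Suc j)"
    using less k_extremum_positions_nth(1)[OF s] Suc.prems assms(2) nth_eq_iff_index_eq by fastforce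
  note next_not = k_peak_next_not_k_peak[OF less k_extremum_positions_nth(1)[OF s Suc.prems] this]
    k_valley_next_not_k_valley[OF less k_extremum_positions_nth(1)[OF s Suc.prems] this]
  show ?case
    using Suc.IH Suc.prems next_not gap k_extremum_positions_nth(2)[OF s, of j] k_extremum_positions_nth(2)[OF s Suc.prems]
    by auto
qed

lemma k_alternating_k_extremum_positions:
  assumes "distinct w" "1 \<le> k"
  shows "k_alternating k (map (nth w) (k_extremum_positions k w))"
proof (rule k_alternatingI[OF assms(2)])
  define s where "s = k_extremum_positions k w"
  fix j assume "Suc j < length (map (nth w) (k_extremum_positions k w))"
  then have j: "Suc j < length s" unfolding s_def by simp
  have gap: "\<forall>c. s!j < c \<and> c < s!Suc j \<longrightarrow> \<not> k_peak k w c"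
    using k_extremum_positions_gap[OF s_def j] by blast
  have less: "s!j < s!Suc j"
    using sorted_k_extremum_positions[of k w] j unfolding s_def[symmetric] by (simp add: sorted_wrt_nth_less)
  have peak: "k_peak k w (s!i) \<longleftrightarrow> even i" and valley: "k_valley k w (s!i) \<longleftrightarrow> odd i" if "i < length s" for i
    using k_peak_nth_k_extremum_positions_iff[OF s_def assms(1) that] k_extremum_positions_nth(2)[OF s_def that]
      k_peak_not_k_valley[OF _ assms(2)] by blast+
  note drop = k_peak_next_k_valley_le[OF less k_extremum_positions_nth(1)[OF s_def j] gap]
    and rise = k_valley_next_k_peak_le[OF less k_extremum_positions_nth(1)[OF s_def j] gap]
  show "even j \<Longrightarrow> map (nth w) (k_extremum_positions k w) ! Suc j + k \<le> map (nth w) (k_extremum_positions k w) ! j"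
    using drop peak[of j] valley[of "Suc j"] j unfolding s_def by simp
  show "odd j \<Longrightarrow> map (nth w) (k_extremum_positions k w) ! j + k \<le> map (nth w) (k_extremum_positions k w) ! Suc j"
    using rise peak[of "Suc j"] valley[of j] j unfolding s_def by simp
qed

lemma ex_k_alternating_subseq:
  assumes "distinct w" "1 \<le> k"
  shows "\<exists>xs. subseq xs w \<and> k_alternating k xs \<and> length xs = card (k_peaks k w) + card (k_valleys k w)"
proof (intro exI conjI)
  show "subseq (map (nth w) (k_extremum_positions k w)) w"
    unfolding subseq_iff_map_nth using sorted_k_extremum_positions set_k_extremum_positions by blast
qed (use k_alternating_k_extremum_positions[OF assms] length_k_extremum_positions[OF assms(2)] in auto)

lemma as_k_eq_card_k_peaks_k_valleys:
  assumes "distinct w" "1 \<le> k"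
  shows "as_k k w = card (k_peaks k w) + card (k_valleys k w)"
  unfolding as_k_def
proof (rule Max_eqI)
  show "finite {length xs |xs. subseq xs w \<and> k_alternating k xs}"
    by (rule finite_subset[of _ "{..length w}"]) (auto dest: list_emb_length)
  show "y \<le> card (k_peaks k w) + card (k_valleys k w)"
    if "y \<in> {length xs |xs. subseq xs w \<and> k_alternating k xs}" for y
    using that k_alternating_length_le by blast
  obtain xs where "subseq xs w" "k_alternating k xs" "length xs = card (k_peaks k w) + card (k_valleys k w)"
    using ex_k_alternating_subseq[OF assms] by blast
  then show "card (k_peaks k w) + card (k_valleys k w) \<in> {length xs |xs. subseq xs w \<and> k_alternating k xs}"
    by force
qed

section \<open>Average numbers of k-peaks and k-valleys\<close>

lemma sum_card_Collect_swap:
  assumes "finite A" "finite B"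
  shows "(\<Sum>x\<in>A. card {y\<in>B. R x y}) = (\<Sum>y\<in>B. card {x\<in>A. R x y})"
proof -
  have "(\<Sum>x\<in>A. card {y\<in>B. R x y}) = (\<Sum>x\<in>A. \<Sum>y\<in>B. if R x y then 1 else 0)"
    using assms(2) by (simp add: sum.If_cases Int_def conj_commute)
  also have "\<dots> = (\<Sum>y\<in>B. \<Sum>x\<in>A. if R x y then 1 else 0)" by (rule sum.swap)
  also have "\<dots> = (\<Sum>y\<in>B. card {x\<in>A. R x y})"
    using assms(1) by (simp add: sum.If_cases Int_def conj_commute)
  finally show ?thesis .
qed

lemma value_in_image_nth_iff:
  assumes "distinct w" "i < length w"
  shows "w!i \<in> nth w ` {j. j < length w \<and> P j} \<longleftrightarrow> P i"
  using assms by (auto simp: nth_eq_iff_index_eq)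

lemma k_peak_value_iff_neighbours_avoid:
  assumes "w \<in> permutations_of_set A" "v \<in> A"
  shows "v \<in> nth w ` k_peaks k w \<longleftrightarrow>
    neighbours_avoid True (\<lambda>x. v < x) v None (filter (\<lambda>x. x \<in> insert v {x\<in>A. v < x \<or> x + k \<le> v}) w)"
proof -
  have w: "distinct w" "set w = A" using assms(1) by (auto dest: permutations_of_setD)
  then obtain i where i: "i < length w" "w!i = v" using assms(2) by (metis in_set_conv_nth)
  have "filter (\<lambda>x. x \<in> insert v {x\<in>A. v < x \<or> x + k \<le> v}) w = filter (\<lambda>x. v < x \<or> x + k \<le> v \<or> x = v) w"
    using w(2) by (intro filter_cong) auto
  then show ?thesis
    using value_in_image_nth_iff[OF w(1) i(1)] k_peak_iff_neighbours_avoid[OF w(1) i(1)] i(2)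
    by (simp add: k_peaks_def)
qed

lemma k_valley_value_iff_neighbours_avoid:
  assumes "w \<in> permutations_of_set A" "v \<in> A"
  shows "v \<in> nth w ` k_valleys k w \<longleftrightarrow>
    neighbours_avoid False (\<lambda>x. x < v) v None (filter (\<lambda>x. x \<in> insert v {x\<in>A. x < v \<or> v + k \<le> x}) w)"
proof -
  have w: "distinct w" "set w = A" using assms(1) by (auto dest: permutations_of_setD)
  then obtain i where i: "i < length w" "w!i = v" using assms(2) by (metis in_set_conv_nth)
  have "filter (\<lambda>x. x \<in> insert v {x\<in>A. x < v \<or> v + k \<le> x}) w = filter (\<lambda>x. x < v \<or> v + k \<le> x \<or> x = v) w"
    using w(2) by (intro filter_cong) auto
  then show ?thesis
    using value_in_image_nth_iff[OF w(1) i(1)] k_valley_iff_neighbours_avoid[OF w(1) i(1)] i(2)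
    by (simp add: k_valleys_def)
qed

text \<open>Both sides vanish for \<open>v \<le> k\<close> (truncated subtraction), and in the next lemma for \<open>n < v + k\<close>.\<close>

lemma card_k_peak_at_value:
  assumes "1 \<le> k" "k + 1 \<le> n" "v \<in> {1..n}"
  shows "card {w\<in>permutations_of_set {1..n}. v \<in> nth w ` k_peaks k w} * ((n - k) * (n - k + 1))
       = fact n * ((v - k) * (v - k + 1))"
proof -
  define D where "D = {x\<in>{1..n}. v < x \<or> x + k \<le> v}"
  have "(if v < n then n else 1) \<in> D" using assms unfolding D_def by auto
  then have D: "D \<subseteq> {1..n} - {v}" "D \<noteq> {}" using assms(1) unfolding D_def by auto
  have "{w\<in>permutations_of_set {1..n}. v \<in> nth w ` k_peaks k w}
      = {w\<in>permutations_of_set {1..n}. neighbours_avoid True (\<lambda>x. v < x) v None (filter (\<lambda>x. x \<in> insert v D) w)}"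
    using k_peak_value_iff_neighbours_avoid[OF _ assms(3)] unfolding D_def by blast
  moreover have "card {x\<in>D. \<not> v < x} = v - k"
  proof -
    have "{x\<in>D. \<not> v < x} = {1..v - k}" unfolding D_def using assms(3) by auto
    then show ?thesis by simp
  qed
  ultimately have eq: "card {w\<in>permutations_of_set {1..n}. v \<in> nth w ` k_peaks k w} * (card D * (card D + 1))
      = fact n * ((v - k) * (v - k + 1))"
    using card_neighbours_avoid_filter[OF _ assms(3) D, of True "\<lambda>x. v < x"]
    by (simp add: power2_eq_square)
  show ?thesis
  proof (cases "v - k = 0")
    case True
    moreover have "0 < card D * (card D + 1)" using D(2) by (simp add: card_gt_0_iff D_def)
    ultimately show ?thesis using eq by simp
  next
    case False
    have "D = {v + 1..n} \<union> {1..v - k}" unfolding D_def using assms(3) False by auto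
    then have "card D = n - k" using assms(3) False by (simp add: card_Un_disjoint)
    then show ?thesis using eq by simp
  qed
qed

lemma card_k_valley_at_value:
  assumes "1 \<le> k" "k + 1 \<le> n" "v \<in> {1..n}"
  shows "card {w\<in>permutations_of_set {1..n}. v \<in> nth w ` k_valleys k w} * ((n - k) * (n - k + 1))
       = fact n * (n + 1 - (v + k))^2"
proof -
  define D where "D = {x\<in>{1..n}. x < v \<or> v + k \<le> x}"
  have "(if 1 < v then 1 else n) \<in> D" using assms unfolding D_def by auto
  then have D: "D \<subseteq> {1..n} - {v}" "D \<noteq> {}" using assms(1) unfolding D_def by auto
  have "{w\<in>permutations_of_set {1..n}. v \<in> nth w ` k_valleys k w}
      = {w\<in>permutations_of_set {1..n}. neighbours_avoid False (\<lambda>x. x < v) v None (filter (\<lambda>x. x \<in> insert v D) w)}"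
    using k_valley_value_iff_neighbours_avoid[OF _ assms(3)] unfolding D_def by blast
  moreover have "card {x\<in>D. \<not> x < v} = n + 1 - (v + k)"
  proof -
    have "{x\<in>D. \<not> x < v} = {v + k..n}" unfolding D_def using assms by auto
    then show ?thesis by simp
  qed
  ultimately have eq: "card {w\<in>permutations_of_set {1..n}. v \<in> nth w ` k_valleys k w} * (card D * (card D + 1))
      = fact n * (n + 1 - (v + k))^2"
    using card_neighbours_avoid_filter[OF _ assms(3) D, of False "\<lambda>x. x < v"] by simp
  show ?thesis
  proof (cases "n + 1 - (v + k) = 0")
    case True
    moreover have "0 < card D * (card D + 1)" using D(2) by (simp add: card_gt_0_iff D_def)
    ultimately show ?thesis using eq by simp
  next
    case False
    have "D = {1..v - 1} \<union> {v + k..n}" unfolding D_def using assms(3) False by auto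
    then have "card D = n - k" using assms(3) False by (simp add: card_Un_disjoint)
    then show ?thesis using eq by simp
  qed
qed

lemma sum_diff_pronic:
  fixes n k :: nat
  shows "3 * (\<Sum>v=1..n. (v - k) * (v - k + 1)) = (n - k) * (n - k + 1) * (n - k + 2)"
proof (induction n)
  case (Suc n)
  show ?case
  proof (cases "n < k")
    case False
    define N where "N = n - k"
    define S where "S = (\<Sum>v=1..n. (v - k) * (v - k + 1))"
    have N: "Suc n - k = Suc N" using False by (simp add: N_def)
    then have "(\<Sum>v=1..Suc n. (v - k) * (v - k + 1)) = S + Suc N * (Suc N + 1)"
      unfolding S_def by simp
    moreover have "3 * S = N * (N + 1) * (N + 2)" using Suc.IH unfolding S_def N_def .
    ultimately show ?thesis using N by (simp add: algebra_simps)
  qed (use Suc.IH in simp)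
qed simp

lemma sum_diff_squares:
  fixes n k :: nat
  shows "6 * (\<Sum>v=1..n. (v - k)^2) = (n - k) * (n - k + 1) * (2 * (n - k) + 1)"
proof (induction n)
  case (Suc n)
  show ?case
  proof (cases "n < k")
    case False
    define N where "N = n - k"
    define S where "S = (\<Sum>v=1..n. (v - k)^2)"
    have N: "Suc n - k = Suc N" using False by (simp add: N_def)
    then have "(\<Sum>v=1..Suc n. (v - k)^2) = S + (Suc N)^2"
      unfolding S_def by simp
    moreover have "6 * S = N * (N + 1) * (2 * N + 1)" using Suc.IH unfolding S_def N_def .
    ultimately show ?thesis using N by (simp add: algebra_simps power2_eq_square)
  qed (use Suc.IH in simp)
qed simp

lemma sum_reflected_diff_squares:
  fixes n k :: nat
  shows "(\<Sum>v=1..n. (n + 1 - (v + k))^2) = (\<Sum>v=1..n. (v - k)^2)"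
  by (rule sum.reindex_bij_witness[of _ "\<lambda>v. n + 1 - v" "\<lambda>v. n + 1 - v"]) auto

lemma sum_card_positions_eq_sum_values:
  fixes n :: nat
  assumes "\<And>w. I w \<subseteq> {..<length w}"
  shows "(\<Sum>w\<in>permutations_of_set {1..n}. card (I w))
       = (\<Sum>v=1..n. card {w\<in>permutations_of_set {1..n}. v \<in> nth w ` I w})"
proof -
  have "card (I w) = card {v\<in>{1..n}. v \<in> nth w ` I w}" if "w \<in> permutations_of_set {1..n}" for w
  proof -
    have w: "distinct w" "set w = {1..n}" using permutations_of_setD[OF that] by auto
    have "{v\<in>{1..n}. v \<in> nth w ` I w} = nth w ` I w" using assms[of w] w(2) nth_mem by fastforce
    moreover have "card (nth w ` I w) = card (I w)" using assms[of w] w(1) by (auto intro!: card_image inj_on_nth)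
    ultimately show ?thesis by simp
  qed
  then have "(\<Sum>w\<in>permutations_of_set {1..n}. card (I w))
      = (\<Sum>w\<in>permutations_of_set {1..n}. card {v\<in>{1..n}. v \<in> nth w ` I w})"
    by (rule sum.cong[OF refl])
  also have "\<dots> = (\<Sum>v=1..n. card {w\<in>permutations_of_set {1..n}. v \<in> nth w ` I w})"
    by (rule sum_card_Collect_swap) simp_all
  finally show ?thesis .
qed

lemma sum_card_k_peaks:
  assumes "1 \<le> k" "k + 1 \<le> n"
  shows "3 * (\<Sum>w\<in>permutations_of_set {1..n}. card (k_peaks k w)) = fact n * (n - k + 2)"
proof -
  define N where "N = n - k"
  define M where "M = N * (N + 1)"
  have "(\<Sum>w\<in>permutations_of_set {1..n}. card (k_peaks k w))
      = (\<Sum>v=1..n. card {w\<in>permutations_of_set {1..n}. v \<in> nth w ` k_peaks k w})"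
    by (rule sum_card_positions_eq_sum_values) (auto simp: k_peaks_def)
  then have "3 * (\<Sum>w\<in>permutations_of_set {1..n}. card (k_peaks k w)) * M
      = fact n * (3 * (\<Sum>v=1..n. (v - k) * (v - k + 1)))"
    using card_k_peak_at_value[OF assms] unfolding M_def N_def
    by (simp add: sum_distrib_right sum_distrib_left mult.assoc mult.left_commute)
  also have "\<dots> = fact n * (N + 2) * M"
    unfolding sum_diff_pronic M_def N_def[symmetric] by (simp add: algebra_simps)
  finally show ?thesis using assms unfolding M_def N_def by simp
qed

lemma sum_card_k_valleys:
  assumes "1 \<le> k" "k + 1 \<le> n"
  shows "6 * (\<Sum>w\<in>permutations_of_set {1..n}. card (k_valleys k w)) = fact n * (2 * (n - k) + 1)"
proof -
  define N where "N = n - k"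
  define M where "M = N * (N + 1)"
  have "(\<Sum>w\<in>permutations_of_set {1..n}. card (k_valleys k w))
      = (\<Sum>v=1..n. card {w\<in>permutations_of_set {1..n}. v \<in> nth w ` k_valleys k w})"
    by (rule sum_card_positions_eq_sum_values) (auto simp: k_valleys_def)
  then have "6 * (\<Sum>w\<in>permutations_of_set {1..n}. card (k_valleys k w)) * M
      = fact n * (6 * (\<Sum>v=1..n. (n + 1 - (v + k))^2))"
    using card_k_valley_at_value[OF assms] unfolding M_def N_def
    by (simp add: sum_distrib_right sum_distrib_left mult.assoc mult.left_commute)
  also have "\<dots> = fact n * (2 * N + 1) * M"
    unfolding sum_reflected_diff_squares sum_diff_squares M_def N_def[symmetric] by (simp add: algebra_simps)
  finally show ?thesis using assms unfolding M_def N_def by simp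
qed

theorem theorem1p1:
  fixes n k :: nat
  assumes "1 \<le> k" and "k + 1 \<le> n"
  shows "(\<Sum>w\<in>permutations_of_set {1..n}. real (as_k k w)) / fact n
           = (4 * (real n - real k) + 5) / 6"
proof -
  have "(\<Sum>w\<in>permutations_of_set {1..n}. as_k k w)
      = (\<Sum>w\<in>permutations_of_set {1..n}. card (k_peaks k w) + card (k_valleys k w))"
    using as_k_eq_card_k_peaks_k_valleys[OF _ assms(1)]
    by (intro sum.cong refl) (auto dest: permutations_of_setD)
  then have "6 * (\<Sum>w\<in>permutations_of_set {1..n}. as_k k w) = fact n * (4 * (n - k) + 5)"
    using sum_card_k_peaks[OF assms] sum_card_k_valleys[OF assms] by (simp add: sum.distrib algebra_simps)
  then have "real (6 * (\<Sum>w\<in>permutations_of_set {1..n}. as_k k w)) = real (fact n * (4 * (n - k) + 5))"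
    by (simp only:)
  then have "6 * (\<Sum>w\<in>permutations_of_set {1..n}. real (as_k k w)) = fact n * (4 * (real n - real k) + 5)"
    using assms(2) by (simp add: of_nat_diff)
  then show ?thesis by (simp add: field_simps)
qed

end
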